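(* In the biased planner's myopic problem described in the context, for every $b\in[1-p,0.5]$, $\pi^0_B(b)\in\{p,1-b\}$.
   Context: A binary state $\omega\in\{G,B\}$; for an agent with public belief $b$ and private signal precision $q\in[0.5,1]$ (signal matches $\omega$ with probability $q$), the action is the signal if $1-q\le b\le q$, $G$ if $b>q$, $B$ if $b<1-q$. Let $z(b,q)=b+q-2bq$. The biased planner has baseline precision $p\in[0.5,1)$, cost $\beta:[0,1]\to[0,\infty)$ non-negative, increasing, continuous, concave with $\beta(0)=0$, and $C>0$; its instantaneous reward is $r_B(b,q)=-\beta(|q-p|)-Cz(b,q)$ if $q\ge\max(b,1-b)$, $-\beta(|q-p|)-C$ if $b<1-q$, and $-\beta(|q-p|)$ if $b>q$. The myopic optimal precision $\pi^0_B(b)$ is a maximizer of $q\mapsto r_B(b,q)$ over $[0.5,1]$. *)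

theory Defs
  imports "HOL-Analysis.Analysis"
begin

definition zfun :: "real \<Rightarrow> real \<Rightarrow> real" where
  "zfun b q = b + q - 2 * b * q"

text \<open>Instantaneous reward of the biased planner, with cost beta, baseline precision p, constant C.\<close>
definition rB :: "(real \<Rightarrow> real) \<Rightarrow> real \<Rightarrow> real \<Rightarrow> real \<Rightarrow> real \<Rightarrow> real" where
  "rB \<beta> p C b q =
     (if q \<ge> max b (1 - b) then - \<beta> \<bar>q - p\<bar> - C * zfun b q
      else if b < 1 - q then - \<beta> \<bar>q - p\<bar> - C
      else - \<beta> \<bar>q - p\<bar>)"

definition is_myopic_opt :: "(real \<Rightarrow> real) \<Rightarrow> real \<Rightarrow> real \<Rightarrow> real \<Rightarrow> real \<Rightarrow> bool" where
  "is_myopic_opt \<beta> p C b q \<longleftrightarrow>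
     q \<in> {1/2..1} \<and> (\<forall>q'\<in>{1/2..1}. rB \<beta> p C b q' \<le> rB \<beta> p C b q)"

end

theory Submission
  imports Defs
begin

text \<open>For \<open>b \<le> 1/2\<close>, a precision \<open>q < 1 - b\<close> triggers a \<open>B\<close> cascade with the full error cost \<open>C\<close>;
  it is dominated by \<open>q = 1 - b\<close>, which is closer to \<open>p\<close> and errs with probability at most 1.
  On the informative region \<open>q \<ge> 1 - b\<close> the error probability \<open>zfun b q\<close> is affine and
  nondecreasing in \<open>q\<close>, so raising \<open>q\<close> beyond \<open>p\<close> only adds cost, while on \<open>[1 - b, p]\<close> the
  reward \<open>-\<beta>(p - q) - C zfun b q\<close> is convex because \<open>\<beta>\<close> is concave; hence it is maximised at
  an endpoint.\<close>

lemma concave_on_comp_reflection: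
  fixes f :: "real \<Rightarrow> real"
  assumes "concave_on S f" "convex T" "\<And>x. x \<in> T \<Longrightarrow> a - x \<in> S"
  shows "concave_on T (\<lambda>x. f (a - x))"
proof -
  have "u * f (a - x) + v * f (a - y) \<le> f (a - (u *\<^sub>R x + v *\<^sub>R y))"
    if "0 \<le> u" "0 \<le> v" "u + v = 1" "x \<in> T" "y \<in> T" for u v x y
  proof -
    have "a - (u *\<^sub>R x + v *\<^sub>R y) = u *\<^sub>R (a - x) + v *\<^sub>R (a - y)"
      using \<open>u + v = 1\<close> by (simp add: algebra_simps flip: distrib_left)
    then show ?thesis
      using assms(1,3) that by (simp add: concave_on_iff)
  qed
  with assms(2) show ?thesis
    by (auto simp: concave_on_iff)
qed

lemma zfun_diff: "zfun b q' - zfun b q = (q' - q) * (1 - 2 * b)"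
  unfolding zfun_def by algebra

lemma zfun_mono:
  assumes "b \<le> 1/2" "q \<le> q'"
  shows "zfun b q \<le> zfun b q'"
  using zfun_diff[of b q' q] assms mult_nonneg_nonneg[of "q' - q" "1 - 2 * b"] by linarith

lemma zfun_le_one:
  assumes "b \<in> {0..1}" "q \<in> {0..1}"
  shows "zfun b q \<le> 1"
proof -
  have "1 - zfun b q = (1 - b) * (1 - q) + b * q"
    unfolding zfun_def by algebra
  moreover have "0 \<le> (1 - b) * (1 - q) + b * q"
    using assms by simp
  ultimately show ?thesis by linarith
qed

lemma rB_informative:
  assumes "b \<le> 1/2" "1 - b \<le> q"
  shows "rB \<beta> p C b q = - \<beta> \<bar>q - p\<bar> - C * zfun b q"
  using assms unfolding rB_def by simp

lemma rB_cascade_B: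
  assumes "b \<le> 1/2" "q < 1 - b"
  shows "rB \<beta> p C b q = - \<beta> \<bar>q - p\<bar> - C"
  using assms unfolding rB_def by simp

lemma rB_cascade_le_boundary:
  assumes "0 \<le> C" "mono_on {0..1} \<beta>"
    and "0 \<le> q" "q < 1 - b" "1 - b \<le> p" "p \<le> 1" "b \<le> 1/2"
  shows "rB \<beta> p C b q \<le> rB \<beta> p C b (1 - b)"
proof -
  have "\<beta> (p - (1 - b)) \<le> \<beta> (p - q)"
    using assms by (intro mono_onD[OF assms(2)]) auto
  moreover have "C * zfun b (1 - b) \<le> C * 1"
    using assms zfun_le_one[of b "1 - b"] by (intro mult_left_mono) auto
  ultimately show ?thesis
    using assms by (simp add: rB_informative rB_cascade_B)
qed

lemma rB_above_baseline_le:
  assumes "0 \<le> C" "mono_on {0..1} \<beta>"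
    and "p \<le> q" "q \<le> 1" "1 - b \<le> p" "0 \<le> p" "b \<le> 1/2"
  shows "rB \<beta> p C b q \<le> rB \<beta> p C b p"
proof -
  have "\<beta> \<bar>p - p\<bar> \<le> \<beta> \<bar>q - p\<bar>"
    using assms by (intro mono_onD[OF assms(2)]) auto
  moreover have "C * zfun b p \<le> C * zfun b q"
    using assms zfun_mono[of b p q] by (intro mult_left_mono) auto
  ultimately show ?thesis
    using assms by (simp add: rB_informative)
qed

lemma rB_between_le_max:
  assumes "0 \<le> C" "concave_on {0..1} \<beta>"
    and "1 - b \<le> q" "q \<le> p" "p \<le> 1" "0 \<le> b" "b \<le> 1/2"
  shows "rB \<beta> p C b q \<le> max (rB \<beta> p C b (1 - b)) (rB \<beta> p C b p)"
proof -
  define g where "g q = - \<beta> (p - q) - C * zfun b q" for q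
  have "concave_on {1 - b..p} (\<lambda>q. \<beta> (p - q))"
    using assms by (intro concave_on_comp_reflection[OF assms(2)]) auto
  moreover have "convex_on {1 - b..p} (\<lambda>q. - C * zfun b q)"
    by (rule convex_onI) (auto simp: zfun_def algebra_simps)
  ultimately have "convex_on {1 - b..p} (\<lambda>q. - \<beta> (p - q) + - C * zfun b q)"
    unfolding concave_on_def by (rule convex_on_add)
  then have "convex_on {1 - b..p} g"
    unfolding g_def by simp
  then have "g q \<le> max (g (1 - b)) (g p)"
    using assms by (intro convex_on_le_max) auto
  moreover have "rB \<beta> p C b x = g x" if "1 - b \<le> x" "x \<le> p" for x
    using that assms by (simp add: rB_informative g_def)
  ultimately show ?thesis
    using assms by simp
qed

lemma rB_le_max_p_one_minus_b:
  assumes "0 \<le> C" "mono_on {0..1} \<beta>" "concave_on {0..1} \<beta>"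
    and "p \<le> 1" "1 - p \<le> b" "b \<le> 1/2" "q \<in> {1/2..1}"
  shows "rB \<beta> p C b q \<le> max (rB \<beta> p C b p) (rB \<beta> p C b (1 - b))"
proof -
  consider "q < 1 - b" | "p \<le> q" | "1 - b \<le> q" "q \<le> p"
    by linarith
  then show ?thesis
  proof cases
    case 1
    then show ?thesis
      using rB_cascade_le_boundary[of C \<beta> q b p] assms by simp
  next
    case 2
    then show ?thesis
      using rB_above_baseline_le[of C \<beta> p q b] assms by simp
  next
    case 3
    then show ?thesis
      using rB_between_le_max[of C \<beta> b q p] assms by simp
  qed
qed

theorem lemma13:
  fixes \<beta> :: "real \<Rightarrow> real" and p C b :: real
  assumes "1/2 \<le> p" and "p < 1" and "C > 0"
    and "\<forall>x\<in>{0..1}. \<beta> x \<ge> 0"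
    and "mono_on {0..1} \<beta>"
    and "continuous_on {0..1} \<beta>"
    and "concave_on {0..1} \<beta>"
    and "\<beta> 0 = 0"
    and "1 - p \<le> b" and "b \<le> 1/2"
  shows "\<exists>q\<in>{p, 1 - b}. is_myopic_opt \<beta> p C b q"
proof -
  define q\<^sub>0 where "q\<^sub>0 = (if rB \<beta> p C b (1 - b) \<le> rB \<beta> p C b p then p else 1 - b)"
  have "rB \<beta> p C b q \<le> rB \<beta> p C b q\<^sub>0" if "q \<in> {1/2..1}" for q
    using rB_le_max_p_one_minus_b[of C \<beta> p b q] assms that unfolding q\<^sub>0_def by auto
  moreover have "q\<^sub>0 \<in> {1/2..1}"
    using assms unfolding q\<^sub>0_def by auto
  ultimately have "is_myopic_opt \<beta> p C b q\<^sub>0"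
    unfolding is_myopic_opt_def by blast
  then show ?thesis
    unfolding q\<^sub>0_def by (auto split: if_splits)
qed

end
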